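(* Under the hypotheses and notation of the setting below, a vector $x=x_1\varepsilon_1+x_2\varepsilon_2$ with $x_1,x_2\neq0$ is $q$-minimal and $g$-anisotropic (i.e. $q(x)\in\mathcal T$) iff $\beta,x_1,x_2\in\mathcal T$ and $\alpha_1x_1^2<_\nu\beta x_1x_2$ and $\alpha_2x_2^2<_\nu\beta x_1x_2$.
   Context: All semirings are commutative with $1$. A semiring $R$ is supertropical if $e:=1+1$ satisfies $e+e=e$ and, for all $x,y\in R$: if $ex\neq ey$ then $x+y\in\{x,y\}$, and if $ex=ey$ then $x+y=ey$. $eR$ is totally ordered by $u\le v\iff u+v=v$; write $x<_\nu y$ for $ex<ey$. $\mathcal T=R\setminus eR$, $\mathcal G=eR\setminus\{0\}$. Setting: $R$ is supertropical with $e\mathcal T=\mathcal G$, $\mathcal T\cdot\mathcal T\subseteq\mathcal T$, $\mathcal G$ cancellative under multiplication; $V$ is free with base $\varepsilon_1,\varepsilon_2$; $q$ is a quadratic form on $V$ (a map with $q(ax)=a^2q(x)$ and some symmetric bilinear companion $b$ with $q(x+y)=q(x)+q(y)+b(x,y)$); $\alpha_i=q(\varepsilon_i)$, $\beta=b(\varepsilon_1,\varepsilon_2)$, so $q(x_1\varepsilon_1+x_2\varepsilon_2)=\alpha_1x_1^2+\beta x_1x_2+\alpha_2x_2^2$. The minimal ordering on $V$: $x\le y\iff\exists z:\ x+z=y$; $x<y$ means $x\le y$, $x\neq y$. $x$ is $q$-minimal if no $x'<x$ has $q(x')=q(x)$. *)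

theory Defs
  imports Main
begin

definition e_el :: "'a::comm_semiring_1" where
  "e_el = 1 + 1"

definition supertropical :: "'a::comm_semiring_1 itself \<Rightarrow> bool" where
  "supertropical _ \<longleftrightarrow> e_el + e_el = (e_el::'a) \<and>
     (\<forall>x y::'a. (e_el * x \<noteq> e_el * y \<longrightarrow> x + y \<in> {x, y}) \<and>
                (e_el * x = e_el * y \<longrightarrow> x + y = e_el * y))"

definition Tset :: "'a::comm_semiring_1 set" where
  "Tset = UNIV - range (\<lambda>x. e_el * x)"

definition Gset :: "'a::comm_semiring_1 set" where
  "Gset = range (\<lambda>x. e_el * x) - {0}"

text \<open>Order on eR: u \<le> v iff u + v = v; x <_nu y iff ex < ey.\<close>
definition nu_less :: "'a::comm_semiring_1 \<Rightarrow> 'a \<Rightarrow> bool" where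
  "nu_less x y \<longleftrightarrow> e_el * x + e_el * y = e_el * y \<and> e_el * x \<noteq> e_el * y"

definition standing_setting :: "'a::comm_semiring_1 itself \<Rightarrow> bool" where
  "standing_setting t \<longleftrightarrow> supertropical t \<and>
     (\<lambda>x. e_el * x) ` (Tset::'a set) = Gset \<and>
     (\<forall>s\<in>(Tset::'a set). \<forall>u\<in>Tset. s * u \<in> Tset) \<and>
     (\<forall>a\<in>(Gset::'a set). \<forall>b\<in>Gset. \<forall>c\<in>Gset. a * c = b * c \<longrightarrow> a = b)"

text \<open>The free module V with base eps1 = (1,0), eps2 = (0,1), as pairs.\<close>
definition vadd :: "'a::comm_semiring_1 \<times> 'a \<Rightarrow> 'a \<times> 'a \<Rightarrow> 'a \<times> 'a" where
  "vadd x y = (fst x + fst y, snd x + snd y)"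

definition vsmult :: "'a::comm_semiring_1 \<Rightarrow> 'a \<times> 'a \<Rightarrow> 'a \<times> 'a" where
  "vsmult a x = (a * fst x, a * snd x)"

definition is_quad_form :: "('a::comm_semiring_1 \<times> 'a \<Rightarrow> 'a) \<Rightarrow> ('a \<times> 'a \<Rightarrow> 'a \<times> 'a \<Rightarrow> 'a) \<Rightarrow> bool" where
  "is_quad_form q b \<longleftrightarrow>
     (\<forall>a x. q (vsmult a x) = a^2 * q x) \<and>
     (\<forall>x y. b x y = b y x) \<and>
     (\<forall>x y z. b (vadd x y) z = b x z + b y z) \<and>
     (\<forall>a x y. b (vsmult a x) y = a * b x y) \<and>
     (\<forall>x y. q (vadd x y) = q x + q y + b x y)"

definition vle :: "'a::comm_semiring_1 \<times> 'a \<Rightarrow> 'a \<times> 'a \<Rightarrow> bool" where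
  "vle x y \<longleftrightarrow> (\<exists>z. vadd x z = y)"

definition vless :: "'a::comm_semiring_1 \<times> 'a \<Rightarrow> 'a \<times> 'a \<Rightarrow> bool" where
  "vless x y \<longleftrightarrow> vle x y \<and> x \<noteq> y"

definition q_minimal :: "('a::comm_semiring_1 \<times> 'a \<Rightarrow> 'a) \<Rightarrow> 'a \<times> 'a \<Rightarrow> bool" where
  "q_minimal q x \<longleftrightarrow> \<not> (\<exists>x'. vless x' x \<and> q x' = q x)"

end

theory Submission
  imports Defs
begin

text \<open>
  A tangible sum in a supertropical semiring equals its unique \<open>\<nu>\<close>-largest summand. So if
  \<open>q(x) = \<alpha>\<^sub>1x\<^sub>1\<^sup>2 + \<beta>x\<^sub>1x\<^sub>2 + \<alpha>\<^sub>2x\<^sub>2\<^sup>2\<close> is tangible, one of the three terms strictly dominates the other two;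
  it cannot be a diagonal term, since \<open>q(x\<^sub>1,0)\<close> and \<open>q(0,x\<^sub>2)\<close> are values at smaller vectors, and
  the cross term is tangible only if \<open>\<beta>, x\<^sub>1, x\<^sub>2\<close> are, because ghosts absorb products.
  Conversely, a vector \<open>y < x\<close> has \<open>y\<^sub>i \<le>\<^sub>\<nu> x\<^sub>i\<close>, strictly for some \<open>i\<close> because \<open>x\<^sub>i\<close> is tangible;
  cancellativity of the ghosts makes the cross term of \<open>y\<close> drop strictly, hence \<open>q(y) <\<^sub>\<nu> q(x)\<close>.
\<close>

definition nu_le :: "'a::comm_semiring_1 \<Rightarrow> 'a \<Rightarrow> bool" where
  "nu_le x y \<longleftrightarrow> e_el * x + e_el * y = e_el * y"

context
  assumes supertropical: "supertropical TYPE('a::comm_semiring_1)"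
begin

lemma e_el_add_self: "e_el + e_el = (e_el::'a)"
  using supertropical unfolding supertropical_def by auto

lemma add_eq_ghost: "e_el * x = e_el * y \<Longrightarrow> x + y = e_el * (y::'a)"
  using supertropical unfolding supertropical_def by auto

lemma add_eq_summand: "e_el * x \<noteq> e_el * y \<Longrightarrow> x + y = x \<or> x + (y::'a) = y"
  using supertropical unfolding supertropical_def by auto

lemma e_el_mult_e_el: "e_el * e_el = (e_el::'a)"
  by (metis e_el_add_self e_el_def distrib_left mult_1_right)

lemma e_el_mult_idem: "e_el * (e_el * x) = e_el * (x::'a)"
  by (metis e_el_mult_e_el mult.assoc)

lemma not_tangible_iff: "(x::'a) \<notin> Tset \<longleftrightarrow> x = e_el * x"
  unfolding Tset_def using e_el_mult_idem by auto

lemma ghost_mult: "(x::'a) \<notin> Tset \<Longrightarrow> x * y \<notin> Tset"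
  using not_tangible_iff e_el_mult_idem by (metis mult.assoc)

lemma nu_le_trans: "nu_le x y \<Longrightarrow> nu_le y z \<Longrightarrow> nu_le x (z::'a)"
  unfolding nu_le_def by (metis add.assoc)

lemma nu_le_total: "nu_le x y \<or> nu_le y (x::'a)"
proof (cases "e_el * (e_el * x) = e_el * (e_el * y)")
  case True
  then show ?thesis
    using add_eq_ghost e_el_mult_idem unfolding nu_le_def by metis
next
  case False
  then show ?thesis
    using add_eq_summand unfolding nu_le_def by (metis add.commute)
qed

lemma nu_le_mult_right: "nu_le x y \<Longrightarrow> nu_le (x * z) (y * (z::'a))"
  unfolding nu_le_def by (metis distrib_right mult.assoc)

lemma nu_le_mult_left: "nu_le x y \<Longrightarrow> nu_le (z * x) (z * (y::'a))"
  using nu_le_mult_right by (metis mult.commute)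

lemma nu_le_power2: "nu_le x y \<Longrightarrow> nu_le (x\<^sup>2) (y\<^sup>2::'a)"
  unfolding power2_eq_square by (metis nu_le_mult_left nu_le_mult_right nu_le_trans)

lemma nu_le_add_right: "nu_le x (x + (y::'a))"
  unfolding nu_le_def distrib_left by (metis add.assoc add_eq_ghost e_el_mult_idem)

lemma nu_less_iff_not_nu_le: "nu_less x y \<longleftrightarrow> \<not> nu_le y (x::'a)"
  unfolding nu_less_def by (metis nu_le_def nu_le_total add.commute)

lemma nu_le_less_trans: "nu_le x y \<Longrightarrow> nu_less y z \<Longrightarrow> nu_less x (z::'a)"
  using nu_less_iff_not_nu_le nu_le_trans by blast

lemma nu_less_add_both: "nu_less x z \<Longrightarrow> nu_less y z \<Longrightarrow> nu_less (x + y) (z::'a)"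
  using nu_le_total unfolding nu_less_def nu_le_def distrib_left by (metis add.commute)

lemma nu_less_imp_add_eq: "nu_less x y \<Longrightarrow> x + y = (y::'a)"
  unfolding nu_less_def by (metis distrib_left add_eq_summand)

lemma tangible_add_cases:
  assumes "x + y \<in> (Tset::'a set)"
  shows "x + y = x \<and> nu_less y x \<or> x + y = y \<and> nu_less x y"
proof -
  have "e_el * x \<noteq> e_el * y"
    using assms add_eq_ghost unfolding Tset_def by fastforce
  then show ?thesis
    using add_eq_summand unfolding nu_less_def by (metis add.commute distrib_left)
qed

lemma tangible_summand_nu_less:
  assumes "y + z \<in> (Tset::'a set)" and "y \<noteq> y + z"
  shows "nu_less y (y + z)"
  using tangible_add_cases[OF assms(1)] assms(2) by auto

lemma tangible_add3_dominant_middle: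
  fixes a m c :: 'a
  assumes "a + m + c \<in> Tset" and "a + m + c \<noteq> a" and "a + m + c \<noteq> c"
  shows "a + m + c = m \<and> nu_less a m \<and> nu_less c m"
proof -
  have "a + m + c = a + m" "nu_less c (a + m)"
    using tangible_add_cases[OF assms(1)] assms(3) by auto
  moreover from this have "a + m = m \<and> nu_less a m"
    using tangible_add_cases[of a m] assms(1,2) by auto
  ultimately show ?thesis by simp
qed

end

context
  assumes standing: "standing_setting TYPE('a::comm_semiring_1)"
begin

lemma standing_supertropical: "supertropical TYPE('a)"
  using standing unfolding standing_setting_def by auto

lemma tangible_mult: "(x::'a) \<in> Tset \<Longrightarrow> y \<in> Tset \<Longrightarrow> x * y \<in> Tset"
  using standing unfolding standing_setting_def by blast

lemma tangible_mult_iff: "(x::'a) * y \<in> Tset \<longleftrightarrow> x \<in> Tset \<and> y \<in> Tset"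
  using tangible_mult ghost_mult[OF standing_supertropical, of x y]
    ghost_mult[OF standing_supertropical, of y x]
  by (auto simp: mult.commute)

lemma e_el_mult_tangible_nonzero: "(x::'a) \<in> Tset \<Longrightarrow> e_el * x \<noteq> 0"
  using standing unfolding standing_setting_def Gset_def by blast

lemma e_el_mult_eq_0_iff: "e_el * (x::'a) = 0 \<longleftrightarrow> x = 0"
proof
  assume ex: "e_el * x = 0"
  show "x = 0"
  proof (cases "x \<in> Tset")
    case True
    then show ?thesis using ex e_el_mult_tangible_nonzero by blast
  next
    case False
    then show ?thesis using ex not_tangible_iff[OF standing_supertropical] by simp
  qed
qed simp

lemma nonzero_in_Gset: "(x::'a) \<noteq> 0 \<Longrightarrow> e_el * x \<in> Gset"
  unfolding Gset_def using e_el_mult_eq_0_iff by simp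

lemma nonzero_nu_eq_tangible: "(x::'a) \<noteq> 0 \<Longrightarrow> \<exists>s\<in>Tset. e_el * x = e_el * s"
proof -
  assume "x \<noteq> 0"
  moreover have "(\<lambda>x. e_el * x) ` (Tset::'a set) = Gset"
    using standing unfolding standing_setting_def by blast
  ultimately show ?thesis
    using nonzero_in_Gset by (metis imageE)
qed

lemma mult_tangible_nonzero:
  assumes "(x::'a) \<noteq> 0" and "z \<in> Tset"
  shows "x * z \<noteq> 0"
proof -
  obtain s where "s \<in> Tset" "e_el * x = e_el * s"
    using nonzero_nu_eq_tangible[OF assms(1)] by blast
  then have "e_el * (x * z) = e_el * (s * z)" "s * z \<in> Tset"
    using assms(2) tangible_mult by (simp_all add: mult.assoc[symmetric])
  then show ?thesis
    using e_el_mult_tangible_nonzero by force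
qed

lemma Gset_mult_cancel_right:
  "(x::'a) \<in> Gset \<Longrightarrow> y \<in> Gset \<Longrightarrow> z \<in> Gset \<Longrightarrow> x * z = y * z \<Longrightarrow> x = y"
  using standing unfolding standing_setting_def by blast

lemma ghost_mult_cancel_right:
  assumes "(x::'a) \<noteq> 0" "y \<noteq> 0" "z \<noteq> 0" and "e_el * (x * z) = e_el * (y * z)"
  shows "e_el * x = e_el * y"
proof (rule Gset_mult_cancel_right)
  have "e_el * (w * z) = e_el * w * (e_el * z)" for w :: 'a
    using e_el_mult_e_el[OF standing_supertropical] by (metis mult.assoc mult.left_commute)
  then show "e_el * x * (e_el * z) = e_el * y * (e_el * z)"
    using assms(4) by simp
qed (use assms nonzero_in_Gset in auto)

lemma nu_less_mult_tangible:
  assumes less: "nu_less x y" and z: "z \<in> (Tset::'a set)"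
  shows "nu_less (x * z) (y * z)"
proof -
  have "nu_le x y"
    using less unfolding nu_less_def nu_le_def by simp
  then have "nu_le (x * z) (y * z)"
    by (rule nu_le_mult_right[OF standing_supertropical])
  moreover have "e_el * (x * z) \<noteq> e_el * (y * z)"
  proof
    assume eq: "e_el * (x * z) = e_el * (y * z)"
    have "y \<noteq> 0"
      using less unfolding nu_less_def by auto
    moreover have "z \<noteq> 0"
      using z not_tangible_iff[OF standing_supertropical, of 0] by auto
    moreover have "x \<noteq> 0"
    proof
      assume "x = 0"
      then have "e_el * (y * z) = 0" using eq by simp
      then show False
        using mult_tangible_nonzero[OF \<open>y \<noteq> 0\<close> z] e_el_mult_eq_0_iff by simp
    qed
    ultimately show False
      using less eq ghost_mult_cancel_right unfolding nu_less_def by blast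
  qed
  ultimately show ?thesis
    unfolding nu_less_def nu_le_def by simp
qed

end

lemma quad_form_pair:
  assumes "is_quad_form q b"
  shows "q (y1, y2) = q (1, 0) * y1\<^sup>2 + b (1, 0) (0, 1) * y1 * y2 + q (0, 1) * (y2::'a::comm_semiring_1)\<^sup>2"
proof -
  have square: "\<And>a x. q (vsmult a x) = a\<^sup>2 * q x"
    and sym: "\<And>x y. b x y = b y x"
    and scalar: "\<And>a x y. b (vsmult a x) y = a * b x y"
    and polar: "\<And>x y. q (vadd x y) = q x + q y + b x y"
    using assms unfolding is_quad_form_def by blast+
  have cross: "b (vsmult y1 (1, 0)) (vsmult y2 (0, 1)) = y1 * (y2 * b (1, 0) (0, 1))"
    by (metis scalar sym)
  have "(y1, y2) = vadd (vsmult y1 (1, 0)) (vsmult y2 (0, 1))"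
    by (simp add: vadd_def vsmult_def)
  then have "q (y1, y2) = y1\<^sup>2 * q (1, 0) + y2\<^sup>2 * q (0, 1) + y1 * (y2 * b (1, 0) (0, 1))"
    by (simp only: polar square cross)
  then show ?thesis
    by (simp add: ac_simps)
qed

lemma q_minimal_tangible_imp_cross_term_dominant:
  fixes q :: "'a::comm_semiring_1 \<times> 'a \<Rightarrow> 'a"
  assumes standing: "standing_setting TYPE('a)" and quad: "is_quad_form q b"
    and "x1 \<noteq> 0" and "x2 \<noteq> 0"
    and minimal: "q_minimal q (x1, x2)" and tangible: "q (x1, x2) \<in> Tset"
  shows "q (x1, x2) = b (1, 0) (0, 1) * x1 * x2 \<and>
         nu_less (q (1, 0) * x1\<^sup>2) (b (1, 0) (0, 1) * x1 * x2) \<and>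
         nu_less (q (0, 1) * x2\<^sup>2) (b (1, 0) (0, 1) * x1 * x2)"
proof -
  have "vadd (x1, 0) (0, x2) = (x1, x2)" "vadd (0, x2) (x1, 0) = (x1, x2)"
    by (simp_all add: vadd_def)
  then have "vless (x1, 0) (x1, x2)" "vless (0, x2) (x1, x2)"
    using assms(3,4) unfolding vless_def vle_def by auto
  then have "q (x1, x2) \<noteq> q (x1, 0)" "q (x1, x2) \<noteq> q (0, x2)"
    using minimal unfolding q_minimal_def by metis+
  moreover have "q (x1, 0) = q (1, 0) * x1\<^sup>2" "q (0, x2) = q (0, 1) * x2\<^sup>2"
    by (simp_all add: quad_form_pair[OF quad, of x1 0] quad_form_pair[OF quad, of 0 x2])
  ultimately show ?thesis
    using tangible_add3_dominant_middle[OF standing_supertropical[OF standing]] tangible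
    unfolding quad_form_pair[OF quad, of x1 x2] by simp
qed

lemma cross_term_dominant_imp_q_minimal:
  fixes q :: "'a::comm_semiring_1 \<times> 'a \<Rightarrow> 'a" and b :: "'a \<times> 'a \<Rightarrow> 'a \<times> 'a \<Rightarrow> 'a"
  defines "\<beta> \<equiv> b (1, 0) (0, 1)"
  assumes standing: "standing_setting TYPE('a)" and quad: "is_quad_form q b"
    and tangible: "\<beta> \<in> Tset" "x1 \<in> Tset" "x2 \<in> Tset"
    and less1: "nu_less (q (1, 0) * x1\<^sup>2) (\<beta> * x1 * x2)"
    and less2: "nu_less (q (0, 1) * x2\<^sup>2) (\<beta> * x1 * x2)"
  shows "q (x1, x2) = \<beta> * x1 * x2" and "q_minimal q (x1, x2)"
proof -
  note supertropical = standing_supertropical[OF standing]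
  have "q (x1, x2) = q (1, 0) * x1\<^sup>2 + \<beta> * x1 * x2 + q (0, 1) * x2\<^sup>2"
    unfolding \<beta>_def by (rule quad_form_pair[OF quad])
  also have "q (1, 0) * x1\<^sup>2 + \<beta> * x1 * x2 = \<beta> * x1 * x2"
    by (rule nu_less_imp_add_eq[OF supertropical less1])
  also have "\<beta> * x1 * x2 + q (0, 1) * x2\<^sup>2 = \<beta> * x1 * x2"
    using nu_less_imp_add_eq[OF supertropical less2] by (simp add: add.commute)
  finally show q_x: "q (x1, x2) = \<beta> * x1 * x2" .
  have below: "nu_less (q (y1, y2)) (\<beta> * x1 * x2)" if smaller: "vless (y1, y2) (x1, x2)" for y1 y2
  proof -
    obtain z where "vadd (y1, y2) z = (x1, x2)" and "(y1, y2) \<noteq> (x1, x2)"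
      using smaller unfolding vless_def vle_def by blast
    then have x: "x1 = y1 + fst z" "x2 = y2 + snd z" and "y1 \<noteq> x1 \<or> y2 \<noteq> x2"
      by (auto simp: vadd_def)
    then consider "nu_less y1 x1" | "nu_less y2 x2"
      using tangible tangible_summand_nu_less[OF supertropical] by metis
    note strict = this
    have le1: "nu_le y1 x1" and le2: "nu_le y2 x2"
      using x nu_le_add_right[OF supertropical] by simp_all
    have "nu_less (\<beta> * y1 * y2) (\<beta> * x1 * x2)"
    proof (cases rule: strict)
      case 1
      have "nu_less (y1 * (\<beta> * x2)) (x1 * (\<beta> * x2))"
        using nu_less_mult_tangible[OF standing 1] tangible_mult[OF standing] tangible by blast
      then have "nu_less (\<beta> * y1 * x2) (\<beta> * x1 * x2)"
        by (simp add: mult_ac)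
      then show ?thesis
        by (rule nu_le_less_trans[OF supertropical nu_le_mult_left[OF supertropical le2]])
    next
      case 2
      have "nu_less (y2 * (\<beta> * x1)) (x2 * (\<beta> * x1))"
        using nu_less_mult_tangible[OF standing 2] tangible_mult[OF standing] tangible by blast
      then have "nu_less (\<beta> * x1 * y2) (\<beta> * x1 * x2)"
        by (simp add: mult_ac)
      moreover have "nu_le (\<beta> * y1 * y2) (\<beta> * x1 * y2)"
        by (rule nu_le_mult_right[OF supertropical nu_le_mult_left[OF supertropical le1]])
      ultimately show ?thesis
        using nu_le_less_trans[OF supertropical] by blast
    qed
    moreover have "nu_less (q (1, 0) * y1\<^sup>2) (\<beta> * x1 * x2)" "nu_less (q (0, 1) * y2\<^sup>2) (\<beta> * x1 * x2)"
      using nu_le_less_trans[OF supertropical nu_le_mult_left[OF supertropical nu_le_power2]]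
        supertropical le1 le2 less1 less2 by blast+
    ultimately show ?thesis
      unfolding quad_form_pair[OF quad, of y1 y2] \<beta>_def[symmetric]
      by (intro nu_less_add_both[OF supertropical])
  qed
  show "q_minimal q (x1, x2)"
    unfolding q_minimal_def
  proof
    assume "\<exists>x'. vless x' (x1, x2) \<and> q x' = q (x1, x2)"
    then obtain y1 y2 where "vless (y1, y2) (x1, x2)" and "q (y1, y2) = q (x1, x2)"
      by auto
    then show False
      using below unfolding q_x nu_less_def by metis
  qed
qed

theorem corollary6p8:
  fixes q :: "'a::comm_semiring_1 \<times> 'a \<Rightarrow> 'a"
    and b :: "'a \<times> 'a \<Rightarrow> 'a \<times> 'a \<Rightarrow> 'a"
    and x1 x2 :: 'a
  assumes "standing_setting TYPE('a)"
    and "is_quad_form q b"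
    and "x1 \<noteq> 0" and "x2 \<noteq> 0"
  shows "(q_minimal q (x1, x2) \<and> q (x1, x2) \<in> Tset) \<longleftrightarrow>
         (b (1, 0) (0, 1) \<in> Tset \<and> x1 \<in> Tset \<and> x2 \<in> Tset \<and>
          nu_less (q (1, 0) * x1^2) (b (1, 0) (0, 1) * x1 * x2) \<and>
          nu_less (q (0, 1) * x2^2) (b (1, 0) (0, 1) * x1 * x2))"
proof
  assume "q_minimal q (x1, x2) \<and> q (x1, x2) \<in> Tset"
  with q_minimal_tangible_imp_cross_term_dominant[OF assms] show "b (1, 0) (0, 1) \<in> Tset \<and>
      x1 \<in> Tset \<and> x2 \<in> Tset \<and>
      nu_less (q (1, 0) * x1^2) (b (1, 0) (0, 1) * x1 * x2) \<and>
      nu_less (q (0, 1) * x2^2) (b (1, 0) (0, 1) * x1 * x2)"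
    by (simp add: tangible_mult_iff[OF assms(1)])
next
  assume "b (1, 0) (0, 1) \<in> Tset \<and> x1 \<in> Tset \<and> x2 \<in> Tset \<and>
      nu_less (q (1, 0) * x1^2) (b (1, 0) (0, 1) * x1 * x2) \<and>
      nu_less (q (0, 1) * x2^2) (b (1, 0) (0, 1) * x1 * x2)"
  with cross_term_dominant_imp_q_minimal[OF assms(1,2)] show "q_minimal q (x1, x2) \<and> q (x1, x2) \<in> Tset"
    by (simp add: tangible_mult_iff[OF assms(1)])
qed

end
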